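(* Let $R=\bigoplus_{s\in S}R_s$ be an $S$-graded ring inducing $S$, where $S$ is cancellative. Then $R$ is graded von Neumann regular if and only if for every $x\in H_R$ there exists $y\in H_R$ such that $x=xyx$.
   Context: Rings are associative, not necessarily unital. Let $S$ be a partial groupoid (set with partial binary operation) and $R$ a ring with additive subgroups $R_s$ ($s\in S$) such that $R=\bigoplus_{s\in S}R_s$, $R_sR_t\subseteq R_{st}$ whenever $st$ is defined, and $R_sR_t\neq 0$ implies $st$ is defined; $R$ is then called an $S$-graded ring inducing $S$. Convention: $S$ contains an element $0$ with $R_0=0$, $S\setminus\{0\}=\{s: R_s\neq 0\}$, and $S$ is made a groupoid by setting $st=0$ when $st$ is undefined and $s0=0s=0$. $H_R=\bigcup_{s\in S}R_s$ is the set of homogeneous elements. $S$ is cancellative if for $s,t,u\in S$ each of $0\neq su=tu$ and $0\neq us=ut$ implies $s=t$. $R$ is graded von Neumann regular if $x\in xRx$ for every $x\in H_R$. *)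

theory Defs
  imports Main
begin

(* The grading monoid-like object S is modelled, following the paper's convention,
   as a (total) groupoid with zero: carrier S, operation m, zero element z, where
   "st undefined" is encoded as m s t = z. *)

definition graded_ring_inducing ::
  "'s set \<Rightarrow> ('s \<Rightarrow> 's \<Rightarrow> 's) \<Rightarrow> 's \<Rightarrow> ('s \<Rightarrow> 'a::ring set) \<Rightarrow> bool" where
  "graded_ring_inducing S m z Rg \<longleftrightarrow>
     z \<in> S \<and>
     (\<forall>s\<in>S. \<forall>t\<in>S. m s t \<in> S) \<and>
     (\<forall>s\<in>S. m s z = z \<and> m z s = z) \<and>
     (\<forall>s\<in>S. 0 \<in> Rg s \<and> (\<forall>a\<in>Rg s. \<forall>b\<in>Rg s. a + b \<in> Rg s) \<and> (\<forall>a\<in>Rg s. - a \<in> Rg s)) \<and>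
     Rg z = {0} \<and>
     (\<forall>s\<in>S. s \<noteq> z \<longrightarrow> Rg s \<noteq> {0}) \<and>
     (\<forall>s\<in>S. \<forall>t\<in>S. \<forall>a\<in>Rg s. \<forall>b\<in>Rg t. a * b \<in> Rg (m s t)) \<and>
     (\<forall>x::'a. \<exists>!f::'s \<Rightarrow> 'a. (\<forall>s. s \<notin> S \<longrightarrow> f s = 0) \<and> (\<forall>s\<in>S. f s \<in> Rg s) \<and>
                 finite {s. f s \<noteq> 0} \<and> x = sum f {s. f s \<noteq> 0})"

definition homogeneous :: "'s set \<Rightarrow> ('s \<Rightarrow> 'a set) \<Rightarrow> 'a set" where
  "homogeneous S Rg = (\<Union>s\<in>S. Rg s)"

definition cancellative :: "'s set \<Rightarrow> ('s \<Rightarrow> 's \<Rightarrow> 's) \<Rightarrow> 's \<Rightarrow> bool" where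
  "cancellative S m z \<longleftrightarrow>
     (\<forall>s\<in>S. \<forall>t\<in>S. \<forall>u\<in>S.
        (m s u \<noteq> z \<and> m s u = m t u \<longrightarrow> s = t) \<and>
        (m u s \<noteq> z \<and> m u s = m u t \<longrightarrow> s = t))"

definition graded_vNr :: "'s set \<Rightarrow> ('s \<Rightarrow> 'a::ring set) \<Rightarrow> bool" where
  "graded_vNr S Rg \<longleftrightarrow> (\<forall>x\<in>homogeneous S Rg. x \<in> {x * r * x | r. True})"

end

theory Submission
  imports Defs
begin

text \<open>If \<open>x \<in> R\<^sub>s\<close> is nonzero and \<open>x = x r x\<close>, write \<open>r = \<Sum>\<^sub>t r\<^sub>t\<close> with \<open>r\<^sub>t \<in> R\<^sub>t\<close>.
  Then \<open>x r\<^sub>t x \<in> R\<^bsub>sts\<^esub>\<close>, so comparing \<open>s\<close>-components gives \<open>x = \<Sum> x r\<^sub>t x\<close> over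
  the \<open>t\<close> with \<open>sts = s\<close>. By cancellativity there is at most one such \<open>t\<close>, and since
  \<open>x \<noteq> 0\<close> there is exactly one, so \<open>x = x r\<^sub>t x\<close> with \<open>r\<^sub>t\<close> homogeneous.\<close>

locale graded_ring =
  fixes S :: "'s set" and m :: "'s \<Rightarrow> 's \<Rightarrow> 's" and z :: 's
    and Rg :: "'s \<Rightarrow> 'a::ring set"
  assumes graded: "graded_ring_inducing S m z Rg"
begin

lemma zero_grade_mem: "z \<in> S"
  using graded unfolding graded_ring_inducing_def by (elim conjE)

lemma zero_grade_component: "Rg z = {0}"
  using graded unfolding graded_ring_inducing_def by (elim conjE)

lemma mult_grade_closed: "s \<in> S \<Longrightarrow> t \<in> S \<Longrightarrow> m s t \<in> S"
  using graded unfolding graded_ring_inducing_def by (elim conjE) blast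

lemma zero_absorbing_left: "s \<in> S \<Longrightarrow> m z s = z"
  using graded unfolding graded_ring_inducing_def by (elim conjE) blast

lemma component_mult: "s \<in> S \<Longrightarrow> t \<in> S \<Longrightarrow> a \<in> Rg s \<Longrightarrow> b \<in> Rg t \<Longrightarrow> a * b \<in> Rg (m s t)"
  using graded unfolding graded_ring_inducing_def by (elim conjE) blast

lemma component_sum:
  assumes "s \<in> S" "\<forall>i\<in>A. a i \<in> Rg s"
  shows "(\<Sum>i\<in>A. a i) \<in> Rg s"
proof -
  have "0 \<in> Rg s"
    using graded assms(1) unfolding graded_ring_inducing_def by (elim conjE) blast
  moreover have "\<forall>b\<in>Rg s. \<forall>c\<in>Rg s. b + c \<in> Rg s"
    using graded assms(1) unfolding graded_ring_inducing_def by (elim conjE) blast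
  ultimately show ?thesis
    using assms(2) by (induction A rule: infinite_finite_induct) auto
qed

definition graded_decomposition :: "('s \<Rightarrow> 'a) \<Rightarrow> 'a \<Rightarrow> bool" where
  "graded_decomposition g x \<longleftrightarrow>
     (\<forall>u. u \<notin> S \<longrightarrow> g u = 0) \<and> (\<forall>u\<in>S. g u \<in> Rg u) \<and>
     finite {u. g u \<noteq> 0} \<and> x = (\<Sum>u | g u \<noteq> 0. g u)"

lemma graded_decomposition_ex1: "\<exists>!g. graded_decomposition g x"
proof -
  have "\<forall>x. \<exists>!g. graded_decomposition g x"
    using graded unfolding graded_ring_inducing_def graded_decomposition_def by (elim conjE)
  then show ?thesis ..
qed

lemma homogeneous_decomposition:
  obtains F f where "finite F" "F \<subseteq> S" "\<forall>t\<in>F. f t \<in> Rg t" "r = (\<Sum>t\<in>F. f t)"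
proof -
  obtain f where "graded_decomposition f r"
    using graded_decomposition_ex1 by blast
  then show thesis
    unfolding graded_decomposition_def by (intro that[of "{s. f s \<noteq> 0}" f]) auto
qed

lemma homogeneous_eq_sum_of_grade:
  assumes "finite A" "\<forall>i\<in>A. k i \<in> S \<and> a i \<in> Rg (k i)"
    and "s \<in> S" "x \<in> Rg s" "x = (\<Sum>i\<in>A. a i)"
  shows "x = (\<Sum>i | i \<in> A \<and> k i = s. a i)"
proof -
  define g where "g u = (\<Sum>i | i \<in> A \<and> k i = u. a i)" for u
  define h where "h u = (if u = s then x else 0)" for u
  have g_outside: "g u = 0" if "u \<notin> k ` A" for u
    using that unfolding g_def by (auto intro: sum.neutral)
  have g_support: "{u. g u \<noteq> 0} \<subseteq> k ` A"
    using g_outside by blast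
  have "(\<Sum>u | g u \<noteq> 0. g u) = (\<Sum>u\<in>k ` A. g u)"
    using assms(1) g_support by (intro sum.mono_neutral_left) auto
  also have "\<dots> = x"
    unfolding g_def assms(5) by (rule sum.group) (use assms(1) in auto)
  finally have g_sum: "x = (\<Sum>u | g u \<noteq> 0. g u)" ..
  have "g u \<in> Rg u" if "u \<in> S" for u
    unfolding g_def using that assms(2) by (intro component_sum) auto
  moreover have "g u = 0" if "u \<notin> S" for u
    using that assms(2) by (intro g_outside) auto
  moreover have "finite {u. g u \<noteq> 0}"
    using g_support assms(1) finite_subset by blast
  ultimately have "graded_decomposition g x"
    using g_sum unfolding graded_decomposition_def by blast
  moreover have "graded_decomposition h x"
  proof -
    have "{u. h u \<noteq> 0} = (if x = 0 then {} else {s})"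
      by (auto simp: h_def)
    then show ?thesis
      using assms(3,4) component_sum[of _ "{}"] unfolding graded_decomposition_def
      by (auto simp: h_def)
  qed
  ultimately have "g s = h s"
    using graded_decomposition_ex1 by blast
  then show ?thesis
    unfolding g_def h_def by simp
qed

lemma sandwich_grade_unique:
  assumes "cancellative S m z" "s \<in> S" "s \<noteq> z" "t\<^sub>1 \<in> S" "t\<^sub>2 \<in> S"
    and "m (m s t\<^sub>1) s = s" "m (m s t\<^sub>2) s = s"
  shows "t\<^sub>1 = t\<^sub>2"
proof -
  have "m s t\<^sub>1 = m s t\<^sub>2"
    using assms unfolding cancellative_def by (metis mult_grade_closed)
  moreover have "m s t\<^sub>1 \<noteq> z"
    using assms(2,3,6) zero_absorbing_left by metis
  ultimately show ?thesis
    using assms(1,2,4,5) unfolding cancellative_def by blast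
qed

lemma homogeneous_inner_inverse:
  assumes "cancellative S m z" "s \<in> S" "x \<in> Rg s" "x = x * r * x"
  shows "\<exists>y\<in>homogeneous S Rg. x = x * y * x"
proof (cases "x = 0")
  case True
  then show ?thesis
    using zero_grade_mem zero_grade_component unfolding homogeneous_def by force
next
  case False
  then have "s \<noteq> z"
    using assms(3) zero_grade_component by auto
  obtain F f where F: "finite F" "F \<subseteq> S" "\<forall>t\<in>F. f t \<in> Rg t" and r: "r = (\<Sum>t\<in>F. f t)"
    by (rule homogeneous_decomposition)
  define T where "T = {t. t \<in> F \<and> m (m s t) s = s}"
  have "x * r * x = (\<Sum>t\<in>F. x * f t * x)"
    by (simp add: r sum_distrib_left sum_distrib_right)
  with assms(4) have x_expanded: "x = (\<Sum>t\<in>F. x * f t * x)"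
    by (rule trans)
  have terms_graded: "\<forall>t\<in>F. m (m s t) s \<in> S \<and> x * f t * x \<in> Rg (m (m s t) s)"
    using F assms(2,3) by (auto intro!: component_mult mult_grade_closed)
  have x_sum: "x = (\<Sum>t\<in>T. x * f t * x)"
    unfolding T_def
    by (rule homogeneous_eq_sum_of_grade[OF F(1) terms_graded assms(2,3) x_expanded])
  then have "T \<noteq> {}"
    using False by (metis sum.empty)
  then obtain t where t: "t \<in> T"
    by blast
  have "T = {t}"
    using t F(2) assms(1,2) \<open>s \<noteq> z\<close> sandwich_grade_unique unfolding T_def by blast
  note x_sum
  also have "(\<Sum>t\<in>T. x * f t * x) = x * f t * x"
    using \<open>T = {t}\<close> by simp
  finally have "x = x * f t * x" .
  moreover have "f t \<in> homogeneous S Rg"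
    using t F unfolding T_def homogeneous_def by blast
  ultimately show ?thesis ..
qed

end

theorem proposition4p2:
  fixes S :: "'s set" and m :: "'s \<Rightarrow> 's \<Rightarrow> 's" and z :: 's
    and Rg :: "'s \<Rightarrow> 'a::ring set"
  assumes "graded_ring_inducing S m z Rg"
    and "cancellative S m z"
  shows "graded_vNr S Rg \<longleftrightarrow>
         (\<forall>x\<in>homogeneous S Rg. \<exists>y\<in>homogeneous S Rg. x = x * y * x)"
proof
  interpret graded_ring S m z Rg
    using assms(1) by unfold_locales
  assume "graded_vNr S Rg"
  show "\<forall>x\<in>homogeneous S Rg. \<exists>y\<in>homogeneous S Rg. x = x * y * x"
  proof
    fix x assume x: "x \<in> homogeneous S Rg"
    then obtain s where "s \<in> S" "x \<in> Rg s"
      unfolding homogeneous_def by blast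
    moreover obtain r where "x = x * r * x"
      using \<open>graded_vNr S Rg\<close> x unfolding graded_vNr_def by blast
    ultimately show "\<exists>y\<in>homogeneous S Rg. x = x * y * x"
      using assms(2) homogeneous_inner_inverse by blast
  qed
next
  assume "\<forall>x\<in>homogeneous S Rg. \<exists>y\<in>homogeneous S Rg. x = x * y * x"
  then show "graded_vNr S Rg"
    unfolding graded_vNr_def by blast
qed

end
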